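(* Let $H:\mathbb{R}^{2m}\to\mathbb{R}$ be smooth and let $\bar\nabla H$ be any discrete gradient of $H$. Let $$S=\begin{pmatrix}0&1\\-1&0\end{pmatrix}$$ (with $m\times m$ blocks). Let $\theta$ be a real $2m\times 2m$ matrix with $\theta^T=S^{-1}\theta S$, and let $f$ be an analytic function whose power series converges at $\theta$. Then the scheme $$y_{n+1}-y_n=f(\theta)\,S\,\bar\nabla H(y_n,y_{n+1})$$ preserves the energy integral exactly: $H(y_{n+1})=H(y_n)$.
   Context: Points are written $y=(x,p)\in\mathbb{R}^{2m}$, $y_n=(x_n,p_n)$. A discrete gradient of $H$ is an $\mathbb{R}^{2m}$-valued function $\bar\nabla H(y_n,y_{n+1})$ with components $\Delta H/\Delta y^k$ such that: - $\sum_k\frac{\Delta H}{\Delta y^k}(y^k_{n+1}-y^k_n)=H(y_{n+1})-H(y_n)$; - $\bar\nabla H(y,y)=(H_x,H_p)$. *)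

theory Defs
  imports "HOL-Analysis.Analysis"
begin

text \<open>Points of R^{2m} are vectors indexed by the sum type 'm + 'm:
  components Inl i are the x-coordinates, Inr i the p-coordinates.\<close>

fun Ck :: "nat \<Rightarrow> ('a::euclidean_space \<Rightarrow> real) \<Rightarrow> bool" where
  "Ck 0 f = continuous_on UNIV f"
| "Ck (Suc k) f = ((\<forall>y. f differentiable (at y)) \<and> continuous_on UNIV f \<and>
      (\<forall>v. Ck k (\<lambda>y. frechet_derivative f (at y) v)))"

definition smooth_fun :: "('a::euclidean_space \<Rightarrow> real) \<Rightarrow> bool" where
  "smooth_fun f = (\<forall>k. Ck k f)"

definition discrete_gradient ::
  "(real^'n \<Rightarrow> real) \<Rightarrow> (real^'n \<Rightarrow> real^'n \<Rightarrow> real^'n) \<Rightarrow> bool" where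
  "discrete_gradient H DG \<longleftrightarrow>
     (\<forall>y y'. (\<Sum>k\<in>UNIV. DG y y' $ k * (y' $ k - y $ k)) = H y' - H y) \<and>
     (\<forall>y. (H has_derivative (\<lambda>h. DG y y \<bullet> h)) (at y))"

text \<open>The symplectic matrix S = [[0, I], [-I, 0]] with m x m blocks.\<close>
definition S_mat :: "real^('m::finite + 'm)^('m + 'm)" where
  "S_mat = (\<chi> i j. case (i, j) of
      (Inl a, Inr b) \<Rightarrow> (if a = b then 1 else 0)
    | (Inr a, Inl b) \<Rightarrow> (if a = b then -1 else 0)
    | _ \<Rightarrow> 0)"

fun mat_pow :: "real^'n^'n \<Rightarrow> nat \<Rightarrow> real^'n^'n" where
  "mat_pow A 0 = mat 1"
| "mat_pow A (Suc k) = A ** mat_pow A k"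

definition mat_series :: "(nat \<Rightarrow> real) \<Rightarrow> real^'n^'n \<Rightarrow> real^'n^'n" where
  "mat_series a A = (\<Sum>k. a k *\<^sub>R mat_pow A k)"

end

theory Submission
  imports Defs
begin

text \<open>Because \<open>S\<close> is orthogonal and skew-symmetric, the hypothesis on \<open>\<theta>\<close> makes every
  \<open>\<theta>\<^sup>k S\<close> skew-symmetric, and since transposition is linear and continuous so is
  \<open>f(\<theta>) S\<close>. With \<open>g\<close> the discrete gradient at \<open>(y\<^sub>n, y\<^sub>n\<^sub>+\<^sub>1)\<close>, the defining identity
  of a discrete gradient then gives \<open>H(y\<^sub>n\<^sub>+\<^sub>1) - H(y\<^sub>n) = g \<bullet> f(\<theta>) S g = 0\<close>.\<close>

fun swap_sum :: "'a + 'a \<Rightarrow> 'a + 'a" where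
  "swap_sum (Inl a) = Inr a"
| "swap_sum (Inr a) = Inl a"

fun sign_sum :: "'a + 'a \<Rightarrow> real" where
  "sign_sum (Inl a) = 1"
| "sign_sum (Inr a) = -1"

lemma S_mat_entry:
  "(S_mat :: real^('m::finite + 'm)^('m + 'm)) $ i $ j = (if j = swap_sum i then sign_sum i else 0)"
  unfolding S_mat_def by (cases i; cases j) auto

lemma transpose_S_mat: "transpose (S_mat :: real^('m::finite + 'm)^('m + 'm)) = - S_mat"
  by (simp add: vec_eq_iff transpose_def S_mat_def split: sum.split)

lemma S_mat_mult_transpose: "S_mat ** transpose (S_mat :: real^('m::finite + 'm)^('m + 'm)) = mat 1"
proof -
  have "(\<Sum>k\<in>UNIV. S_mat $ i $ k * S_mat $ j $ k) = sign_sum i * S_mat $ j $ swap_sum i"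
    for i j :: "'m + 'm"
    by (simp add: S_mat_entry[of i] if_distrib[of "\<lambda>x. x * S_mat $ j $ _"] cong: if_cong)
  also have "\<dots> i j = (if i = j then 1 else 0)" for i j :: "'m + 'm"
    by (cases i; cases j) (simp_all add: S_mat_entry)
  finally show ?thesis
    by (simp add: vec_eq_iff matrix_matrix_mult_def transpose_def mat_def)
qed

lemma matrix_inv_orthogonal:
  fixes P :: "real^'n^'n"
  assumes "P ** transpose P = mat 1"
  shows "matrix_inv P = transpose P"
proof -
  have "P ** transpose P = mat 1 \<and> transpose P ** P = mat 1"
    using assms matrix_left_right_inverse by blast
  then have left_inverse: "matrix_inv P ** P = mat 1"
    unfolding matrix_inv_def by (rule someI2) simp
  have "matrix_inv P = matrix_inv P ** (P ** transpose P)"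
    by (simp add: assms)
  also have "\<dots> = (matrix_inv P ** P) ** transpose P"
    by (rule matrix_mul_assoc)
  finally show ?thesis
    by (simp add: left_inverse)
qed

lemma linear_transpose: "linear (transpose :: real^'n^'m \<Rightarrow> real^'m^'n)"
  by (rule linearI) (simp_all add: transpose_def vec_eq_iff)

lemma linear_matrix_mult_right: "linear (\<lambda>M::real^'n^'m. M ** (P::real^'p^'n))"
  by (rule linearI) (simp_all add: matrix_matrix_mult_def vec_eq_iff sum.distrib distrib_right
      sum_distrib_left mult.assoc)

lemma mat_pow_Suc_right: "mat_pow A (Suc k) = mat_pow A k ** A"
  by (induction k) (simp_all add: matrix_mul_assoc)

lemma transpose_mat_pow_orthogonal_conj:
  fixes A P :: "real^'n^'n"
  assumes orth: "P ** transpose P = mat 1"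
    and conj: "transpose A = transpose P ** A ** P"
  shows "transpose (mat_pow A k) = transpose P ** mat_pow A k ** P"
proof (induction k)
  case 0
  show ?case
    using orth matrix_left_right_inverse[of P "transpose P"] by simp
next
  case (Suc k)
  have "transpose (mat_pow A (Suc k)) = transpose (mat_pow A k) ** transpose A"
    by (simp add: matrix_transpose_mul)
  also have "\<dots> = transpose P ** mat_pow A k ** (P ** transpose P) ** A ** P"
    by (simp add: Suc conj matrix_mul_assoc)
  also have "\<dots> = transpose P ** mat_pow A (Suc k) ** P"
    by (simp del: mat_pow.simps add: orth mat_pow_Suc_right matrix_mul_assoc)
  finally show ?case .
qed

lemma matrix_mul_uminus_left: "(- A) ** B = - (A ** (B :: 'a::comm_ring_1^'p^'n))"
  by (simp add: matrix_matrix_mult_def vec_eq_iff sum_negf)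

lemma skew_mat_pow_mult:
  fixes A P :: "real^'n^'n"
  assumes orth: "P ** transpose P = mat 1"
    and skew: "transpose P = - P"
    and conj: "transpose A = transpose P ** A ** P"
  shows "transpose (mat_pow A k ** P) = - (mat_pow A k ** P)"
proof -
  have "transpose P ** transpose P = - mat 1"
    by (subst (1) skew) (simp add: matrix_mul_uminus_left orth)
  moreover have "transpose (mat_pow A k ** P) = (transpose P ** transpose P) ** (mat_pow A k ** P)"
    by (simp add: matrix_transpose_mul transpose_mat_pow_orthogonal_conj[OF orth conj]
        matrix_mul_assoc)
  ultimately show ?thesis
    by (simp add: matrix_mul_uminus_left)
qed

lemma skew_mat_series_mult:
  fixes A P :: "real^'n^'n"
  assumes orth: "P ** transpose P = mat 1"
    and skew: "transpose P = - P"
    and conj: "transpose A = transpose P ** A ** P"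
    and summable: "summable (\<lambda>k. a k *\<^sub>R mat_pow A k)"
  shows "transpose (mat_series a A ** P) = - (mat_series a A ** P)"
proof -
  let ?skew_part = "\<lambda>M::real^'n^'n. transpose (M ** P) + M ** P"
  have "linear ?skew_part"
    using linear_compose[OF linear_matrix_mult_right linear_transpose]
    by (intro linear_compose_add linear_matrix_mult_right) (simp add: o_def)
  then have "bounded_linear ?skew_part"
    by (simp add: linear_conv_bounded_linear)
  from bounded_linear.suminf[OF this summable]
  have "?skew_part (mat_series a A) = (\<Sum>k. ?skew_part (a k *\<^sub>R mat_pow A k))"
    by (simp add: mat_series_def)
  also have "\<dots> = 0"
    by (simp add: scalar_matrix_assoc[symmetric] transpose_scalar
        skew_mat_pow_mult[OF orth skew conj])
  finally show ?thesis
    by (simp add: eq_neg_iff_add_eq_0)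
qed

lemma inner_skew_matrix_vector:
  fixes B :: "real^'n^'n"
  assumes "transpose B = - B"
  shows "g \<bullet> (B *v g) = 0"
proof -
  have "g v* B = (- B) *v g"
    by (metis assms transpose_matrix_vector)
  also have "\<dots> = - (B *v g)"
    by (simp add: matrix_vector_mult_def vec_eq_iff sum_negf)
  finally have vector_mult_B: "g v* B = - (B *v g)" .
  have "g \<bullet> (B *v g) = (g v* B) \<bullet> g"
    by (simp add: dot_lmul_matrix)
  also have "\<dots> = - (g \<bullet> (B *v g))"
    by (simp add: vector_mult_B inner_commute)
  finally show ?thesis
    by simp
qed

theorem corollary6p7:
  fixes H :: "real^('m::finite + 'm) \<Rightarrow> real"
    and DG :: "real^('m + 'm) \<Rightarrow> real^('m + 'm) \<Rightarrow> real^('m + 'm)"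
    and \<theta> :: "real^('m + 'm)^('m + 'm)"
    and a :: "nat \<Rightarrow> real"
    and y :: "nat \<Rightarrow> real^('m + 'm)"
  assumes "smooth_fun H"
    and "discrete_gradient H DG"
    and "transpose \<theta> = matrix_inv S_mat ** \<theta> ** S_mat"
    and "summable (\<lambda>k. a k *\<^sub>R mat_pow \<theta> k)"
    and "\<forall>n. y (Suc n) - y n = (mat_series a \<theta> ** S_mat) *v DG (y n) (y (Suc n))"
  shows "\<forall>n. H (y (Suc n)) = H (y n)"
proof
  fix n
  define g where "g = DG (y n) (y (Suc n))"
  have "transpose \<theta> = transpose S_mat ** \<theta> ** S_mat"
    using assms(3) by (simp add: matrix_inv_orthogonal[OF S_mat_mult_transpose])
  then have skew: "transpose (mat_series a \<theta> ** S_mat) = - (mat_series a \<theta> ** S_mat)"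
    using skew_mat_series_mult[OF S_mat_mult_transpose transpose_S_mat _ assms(4)] by blast
  have "H (y (Suc n)) - H (y n) = g \<bullet> (y (Suc n) - y n)"
    using assms(2) by (simp add: discrete_gradient_def g_def inner_vec_def)
  also have "\<dots> = g \<bullet> ((mat_series a \<theta> ** S_mat) *v g)"
    using assms(5) by (simp add: g_def)
  also have "\<dots> = 0"
    by (rule inner_skew_matrix_vector[OF skew])
  finally show "H (y (Suc n)) = H (y n)"
    by simp
qed

end
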